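(* Every pattern in $S_3$ other than $[123]$, namely $[132]$, $[213]$, $[231]$, $[312]$ and $[321]$, admits a bountiful width system.
   Context: For $x=[x_1,\dots,x_N]\in S_N$ and a pattern $\sigma\in S_k$, an instance of $\sigma$ in $x$ is a tuple of positions $P=(P_1<\dots<P_k)$ with $(x_{P_1},\dots,x_{P_k})$ in the same relative order as $(\sigma(1),\dots,\sigma(k))$. A width system for $\sigma$ is a finite sequence of pairs $(a_1,b_1),\dots,(a_m,b_m)$ with $1\le a_l<b_l\le k$; it assigns to each instance $P$ the tuple $w(P)=(P_{b_1}-P_{a_1},\dots,P_{b_m}-P_{a_m})$. An instance is minimal in $x$ if $w(P)$ is lexicographically minimal among all instances of $\sigma$ in $x$, and locally minimal if it is a minimal instance of $\sigma$ in the consecutive segment $[x_{P_1},x_{P_1+1},\dots,x_{P_k}]$. The width system is bountiful if for every $x\in S_N$ (any $N$), every locally minimal instance $P$ and every position $t$ with $P_1<t<P_k$, $t\notin\{P_1,\dots,P_k\}$, either $x_t<x_{P_j}$ for all $j$ with $P_j<t$, or $x_t>x_{P_j}$ for all $j$ with $P_j>t$. $\sigma$ admits a bountiful width system if some width system for $\sigma$ is bountiful. *)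

theory Defs
  imports Main
begin

text \<open>Positions in lists are 0-indexed (widths are differences of positions, so this is
just a uniform shift of the paper's 1-indexed positions).\<close>

definition is_perm :: "nat list \<Rightarrow> bool" where
  "is_perm x \<longleftrightarrow> distinct x \<and> set x = {1..length x}"

definition is_instance :: "nat list \<Rightarrow> nat list \<Rightarrow> nat list \<Rightarrow> bool" where
  "is_instance sigma x P \<longleftrightarrow>
     length P = length sigma \<and> sorted_wrt (<) P \<and> (\<forall>p\<in>set P. p < length x) \<and>
     (\<forall>i<length sigma. \<forall>j<length sigma.
        (x ! (P ! i) < x ! (P ! j)) = (sigma ! i < sigma ! j))"

text \<open>A width system for sigma: pairs (a,b) with 1 \<le> a < b \<le> k (1-indexed pattern positions).\<close>
definition is_width_system :: "nat list \<Rightarrow> (nat \<times> nat) list \<Rightarrow> bool" where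
  "is_width_system sigma ws \<longleftrightarrow>
     (\<forall>(a,b)\<in>set ws. 1 \<le> a \<and> a < b \<and> b \<le> length sigma)"

definition width :: "(nat \<times> nat) list \<Rightarrow> nat list \<Rightarrow> nat list" where
  "width ws P = map (\<lambda>(a,b). P ! (b - 1) - P ! (a - 1)) ws"

definition lex_le :: "nat list \<Rightarrow> nat list \<Rightarrow> bool" where
  "lex_le u v \<longleftrightarrow> u = v \<or>
     (\<exists>i. i < length u \<and> i < length v \<and> take i u = take i v \<and> u ! i < v ! i)"

definition minimal_instance :: "nat list \<Rightarrow> (nat \<times> nat) list \<Rightarrow> nat list \<Rightarrow> nat list \<Rightarrow> bool" where
  "minimal_instance sigma ws x P \<longleftrightarrow>
     is_instance sigma x P \<and>
     (\<forall>Q. is_instance sigma x Q \<longrightarrow> lex_le (width ws P) (width ws Q))"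

text \<open>Locally minimal: P (shifted) is a minimal instance in the consecutive segment
x_{P_1}, ..., x_{P_k}.\<close>
definition locally_minimal :: "nat list \<Rightarrow> (nat \<times> nat) list \<Rightarrow> nat list \<Rightarrow> nat list \<Rightarrow> bool" where
  "locally_minimal sigma ws x P \<longleftrightarrow>
     is_instance sigma x P \<and> P \<noteq> [] \<and>
     minimal_instance sigma ws (take (last P - hd P + 1) (drop (hd P) x))
        (map (\<lambda>p. p - hd P) P)"

definition bountiful :: "nat list \<Rightarrow> (nat \<times> nat) list \<Rightarrow> bool" where
  "bountiful sigma ws \<longleftrightarrow>
     (\<forall>x P t. is_perm x \<longrightarrow> locally_minimal sigma ws x P \<longrightarrow>
        hd P < t \<longrightarrow> t < last P \<longrightarrow> t \<notin> set P \<longrightarrow>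
        ((\<forall>j<length P. P ! j < t \<longrightarrow> x ! t < x ! (P ! j)) \<or>
         (\<forall>j<length P. t < P ! j \<longrightarrow> x ! (P ! j) < x ! t)))"

definition admits_bountiful :: "nat list \<Rightarrow> bool" where
  "admits_bountiful sigma \<longleftrightarrow> (\<exists>ws. is_width_system sigma ws \<and> bountiful sigma ws)"

end

theory Submission
  imports Defs
begin

text \<open>A locally minimal instance is lexicographically width-minimal among all instances
lying between its first and last position, because the segment it cuts out contains
exactly those. For a pattern of length three, suppose an interior point t violates the
bountiful condition. Then the value at t is trapped between values of the instance in such
a way that replacing a suitable entry of the instance by t yields another instance of the
pattern inside the same span, and the width system is chosen so that this new instance is
strictly narrower. For 321 no widths are needed: a trapped t cannot exist at all.\<close>

lemma lex_le_Nil [simp]: "lex_le [] []"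
  by (simp add: lex_le_def)

lemma lex_le_Cons [simp]:
  "lex_le (u # us) (v # vs) \<longleftrightarrow> u < v \<or> (u = v \<and> lex_le us vs)"
proof
  assume "lex_le (u # us) (v # vs)"
  then consider "u # us = v # vs"
    | i where "i < length (u # us)" "i < length (v # vs)" "take i (u # us) = take i (v # vs)"
        "(u # us) ! i < (v # vs) ! i"
    unfolding lex_le_def by blast
  then show "u < v \<or> (u = v \<and> lex_le us vs)"
  proof cases
    case (2 i)
    then show ?thesis by (cases i) (auto simp: lex_le_def)
  qed (simp add: lex_le_def)
next
  assume "u < v \<or> (u = v \<and> lex_le us vs)"
  then show "lex_le (u # us) (v # vs)"
  proof
    assume "u < v"
    then show ?thesis unfolding lex_le_def by (intro disjI2 exI[of _ 0]) simp
  next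
    assume "u = v \<and> lex_le us vs"
    then show ?thesis unfolding lex_le_def
      by (elim conjE disjE exE) (auto intro!: exI[of _ "Suc i" for i])
  qed
qed

lemma width_map_minus:
  assumes "is_width_system sigma ws" and "length P = length sigma" and "\<forall>p\<in>set P. h \<le> p"
  shows "width ws (map (\<lambda>p. p - h) P) = width ws P"
proof -
  have idx: "a - 1 < length P" "b - 1 < length P" if "(a, b) \<in> set ws" for a b
    using assms(1,2) that unfolding is_width_system_def by auto
  have "P ! (b - 1) - h - (P ! (a - 1) - h) = P ! (b - 1) - P ! (a - 1)"
    if "(a, b) \<in> set ws" for a b
  proof -
    have "h \<le> P ! (a - 1)" "h \<le> P ! (b - 1)" using assms(3) idx[OF that] by auto
    then show ?thesis by arith
  qed
  then show ?thesis unfolding width_def using idx by (auto intro!: map_cong)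
qed

lemma is_instance_segment:
  assumes inst: "is_instance sigma x Q" and span: "\<forall>q\<in>set Q. h \<le> q \<and> q \<le> l"
    and "l < length x"
  shows "is_instance sigma (take (l - h + 1) (drop h x)) (map (\<lambda>q. q - h) Q)"
proof -
  let ?y = "take (l - h + 1) (drop h x)"
  have y: "q - h < length ?y" "?y ! (q - h) = x ! q" if "q \<in> set Q" for q
    using span that \<open>l < length x\<close> by auto
  have "sorted_wrt (\<lambda>p q. p - h < q - h) Q"
    using inst span unfolding is_instance_def
    by (metis (no_types, lifting) diff_less_mono sorted_wrt_mono_rel)
  moreover have "length Q = length sigma" and "\<forall>i<length sigma. \<forall>j<length sigma.
      (x ! (Q ! i) < x ! (Q ! j)) = (sigma ! i < sigma ! j)"
    using inst unfolding is_instance_def by auto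
  ultimately show ?thesis
    unfolding is_instance_def sorted_wrt_map using y by auto
qed

lemma locally_minimal_le_width:
  assumes lm: "locally_minimal sigma ws x P" and ws: "is_width_system sigma ws"
    and inst: "is_instance sigma x Q" and span: "\<forall>q\<in>set Q. hd P \<le> q \<and> q \<le> last P"
  shows "lex_le (width ws P) (width ws Q)"
proof -
  have P: "is_instance sigma x P" "P \<noteq> []"
    and min: "minimal_instance sigma ws (take (last P - hd P + 1) (drop (hd P) x))
                (map (\<lambda>p. p - hd P) P)"
    using lm unfolding locally_minimal_def by auto
  have "sorted_wrt (<) P" using P by (simp add: is_instance_def)
  then have "\<forall>p\<in>set P. hd P \<le> p"
    using P(2) by (cases P) (auto intro: less_imp_le)
  then have "width ws (map (\<lambda>p. p - hd P) P) = width ws P"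
    using width_map_minus ws P(1) unfolding is_instance_def by blast
  moreover have "width ws (map (\<lambda>q. q - hd P) Q) = width ws Q"
    using width_map_minus ws inst span unfolding is_instance_def by blast
  moreover have "last P < length x" using P unfolding is_instance_def by simp
  ultimately show ?thesis
    using min is_instance_segment[OF inst span] unfolding minimal_instance_def by metis
qed

lemma is_instance_3:
  "is_instance [s1, s2, s3] x [a, b, c] \<longleftrightarrow> a < b \<and> b < c \<and> c < length x \<and>
     (x ! a < x ! b \<longleftrightarrow> s1 < s2) \<and> (x ! b < x ! a \<longleftrightarrow> s2 < s1) \<and>
     (x ! a < x ! c \<longleftrightarrow> s1 < s3) \<and> (x ! c < x ! a \<longleftrightarrow> s3 < s1) \<and>
     (x ! b < x ! c \<longleftrightarrow> s2 < s3) \<and> (x ! c < x ! b \<longleftrightarrow> s3 < s2)"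
  unfolding is_instance_def by (simp add: All_less_Suc numeral_3_eq_3) (meson order.strict_trans)

text \<open>The conclusion of \<open>escape\<close> is the bountiful condition at t for the instance
[p1, p2, p3], with the quantifiers over its three positions unfolded.\<close>

lemma bountiful_length3I:
  assumes len: "length sigma = 3" and ws: "is_width_system sigma ws"
    and escape: "\<And>x p1 p2 p3 t.
      is_instance sigma x [p1, p2, p3] \<Longrightarrow>
      (\<And>a b c. is_instance sigma x [a, b, c] \<Longrightarrow> p1 \<le> a \<Longrightarrow> c \<le> p3 \<Longrightarrow>
         lex_le (width ws [p1, p2, p3]) (width ws [a, b, c])) \<Longrightarrow>
      p1 < t \<Longrightarrow> t < p3 \<Longrightarrow> t \<noteq> p2 \<Longrightarrow>
      x ! t \<noteq> x ! p1 \<Longrightarrow> x ! t \<noteq> x ! p2 \<Longrightarrow> x ! t \<noteq> x ! p3 \<Longrightarrow>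
      (x ! t < x ! p1 \<and> (p2 < t \<longrightarrow> x ! t < x ! p2)) \<or>
      ((t < p2 \<longrightarrow> x ! p2 < x ! t) \<and> x ! p3 < x ! t)"
  shows "bountiful sigma ws"
  unfolding bountiful_def
proof (intro allI impI)
  fix x P t
  assume perm: "is_perm x" and lm: "locally_minimal sigma ws x P"
    and t: "hd P < t" "t < last P" "t \<notin> set P"
  have inst: "is_instance sigma x P" using lm by (simp add: locally_minimal_def)
  then obtain p1 p2 p3 where P: "P = [p1, p2, p3]"
    using len by (auto simp: is_instance_def numeral_3_eq_3 length_Suc_conv)
  have ord: "p1 < p2" "p2 < p3" "p3 < length x" using inst by (auto simp: P is_instance_def)
  have min: "lex_le (width ws [p1, p2, p3]) (width ws [a, b, c])"
    if "is_instance sigma x [a, b, c]" "p1 \<le> a" "c \<le> p3" for a b c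
  proof -
    have "a < b" "b < c" using that(1) by (auto simp: is_instance_def)
    then show ?thesis
      using locally_minimal_le_width[OF lm ws that(1)] that(2,3) by (simp add: P)
  qed
  have "x ! t \<noteq> x ! p" if "p \<in> set P" for p
    using perm t that ord unfolding is_perm_def P by (auto simp: nth_eq_iff_index_eq)
  then have "(x ! t < x ! p1 \<and> (p2 < t \<longrightarrow> x ! t < x ! p2)) \<or>
      ((t < p2 \<longrightarrow> x ! p2 < x ! t) \<and> x ! p3 < x ! t)"
    using escape[OF inst[unfolded P] min] t by (auto simp: P)
  then show "(\<forall>j<length P. P ! j < t \<longrightarrow> x ! t < x ! (P ! j)) \<or>
      (\<forall>j<length P. t < P ! j \<longrightarrow> x ! (P ! j) < x ! t)"
    using t ord by (auto simp: P All_less_Suc)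
qed

lemma bountiful_132: "bountiful [1, 3, 2] [(1, 3), (1, 2)]"
proof (rule bountiful_length3I)
  fix x p1 p2 p3 t
  assume inst: "is_instance [1, 3, 2] x [p1, p2, p3]"
    and min: "\<And>a b c. is_instance [1, 3, 2] x [a, b, c] \<Longrightarrow> p1 \<le> a \<Longrightarrow> c \<le> p3 \<Longrightarrow>
      lex_le (width [(1, 3), (1, 2)] [p1, p2, p3]) (width [(1, 3), (1, 2)] [a, b, c])"
    and t: "p1 < t" "t < p3" "t \<noteq> p2"
    and new_value: "x ! t \<noteq> x ! p1" "x ! t \<noteq> x ! p2" "x ! t \<noteq> x ! p3"
  have ord: "p1 < p2" "p2 < p3" "p3 < length x" and val: "x ! p1 < x ! p3" "x ! p3 < x ! p2"
    using inst by (simp_all add: is_instance_3)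
  show "(x ! t < x ! p1 \<and> (p2 < t \<longrightarrow> x ! t < x ! p2)) \<or>
      ((t < p2 \<longrightarrow> x ! p2 < x ! t) \<and> x ! p3 < x ! t)"
  proof (rule ccontr)
    assume trapped: "\<not> ?thesis"
    show False
    proof (cases "t < p2")
      case True
      with trapped val new_value have "x ! p1 < x ! t" "x ! t < x ! p2" by auto
      then consider "x ! p3 < x ! t" | "x ! t < x ! p3" using new_value by linarith
      then show False
      proof cases
        case 1
        then show False using min[of p1 t p3] \<open>t < p2\<close> \<open>x ! t < x ! p2\<close> t ord val
          by (auto simp: is_instance_3 width_def)
      next
        case 2
        then show False using min[of t p2 p3] \<open>t < p2\<close> \<open>x ! p1 < x ! t\<close> t ord val
          by (auto simp: is_instance_3 width_def)
      qed
    next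
      case False
      with trapped val new_value t have "p2 < t" "x ! p1 < x ! t" "x ! t < x ! p3" by auto
      then show False using min[of p1 p2 t] t ord val
        by (auto simp: is_instance_3 width_def)
    qed
  qed
qed (simp_all add: is_width_system_def)

lemma bountiful_213: "bountiful [2, 1, 3] [(1, 3), (2, 3)]"
proof (rule bountiful_length3I)
  fix x p1 p2 p3 t
  assume inst: "is_instance [2, 1, 3] x [p1, p2, p3]"
    and min: "\<And>a b c. is_instance [2, 1, 3] x [a, b, c] \<Longrightarrow> p1 \<le> a \<Longrightarrow> c \<le> p3 \<Longrightarrow>
      lex_le (width [(1, 3), (2, 3)] [p1, p2, p3]) (width [(1, 3), (2, 3)] [a, b, c])"
    and t: "p1 < t" "t < p3" "t \<noteq> p2"
    and new_value: "x ! t \<noteq> x ! p1" "x ! t \<noteq> x ! p2" "x ! t \<noteq> x ! p3"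
  have ord: "p1 < p2" "p2 < p3" "p3 < length x" and val: "x ! p2 < x ! p1" "x ! p1 < x ! p3"
    using inst by (simp_all add: is_instance_3)
  show "(x ! t < x ! p1 \<and> (p2 < t \<longrightarrow> x ! t < x ! p2)) \<or>
      ((t < p2 \<longrightarrow> x ! p2 < x ! t) \<and> x ! p3 < x ! t)"
  proof (rule ccontr)
    assume trapped: "\<not> ?thesis"
    show False
    proof (cases "t < p2")
      case True
      with trapped val new_value have "x ! p1 < x ! t" "x ! t < x ! p3" by auto
      then show False using min[of t p2 p3] \<open>t < p2\<close> t ord val
        by (auto simp: is_instance_3 width_def)
    next
      case False
      with trapped val new_value t have "p2 < t" "x ! p2 < x ! t" "x ! t < x ! p3" by auto
      then consider "x ! p1 < x ! t" | "x ! t < x ! p1" using new_value by linarith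
      then show False
      proof cases
        case 1
        then show False using min[of p1 p2 t] \<open>p2 < t\<close> \<open>x ! t < x ! p3\<close> t ord val
          by (auto simp: is_instance_3 width_def)
      next
        case 2
        then show False using min[of p1 t p3] \<open>p2 < t\<close> \<open>x ! p2 < x ! t\<close> t ord val
          by (auto simp: is_instance_3 width_def)
      qed
    qed
  qed
qed (simp_all add: is_width_system_def)

lemma bountiful_231: "bountiful [2, 3, 1] [(1, 3)]"
proof (rule bountiful_length3I)
  fix x p1 p2 p3 t
  assume inst: "is_instance [2, 3, 1] x [p1, p2, p3]"
    and min: "\<And>a b c. is_instance [2, 3, 1] x [a, b, c] \<Longrightarrow> p1 \<le> a \<Longrightarrow> c \<le> p3 \<Longrightarrow>
      lex_le (width [(1, 3)] [p1, p2, p3]) (width [(1, 3)] [a, b, c])"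
    and t: "p1 < t" "t < p3" "t \<noteq> p2"
    and new_value: "x ! t \<noteq> x ! p1" "x ! t \<noteq> x ! p2" "x ! t \<noteq> x ! p3"
  have ord: "p1 < p2" "p2 < p3" "p3 < length x" and val: "x ! p3 < x ! p1" "x ! p1 < x ! p2"
    using inst by (simp_all add: is_instance_3)
  show "(x ! t < x ! p1 \<and> (p2 < t \<longrightarrow> x ! t < x ! p2)) \<or>
      ((t < p2 \<longrightarrow> x ! p2 < x ! t) \<and> x ! p3 < x ! t)"
  proof (rule ccontr)
    assume trapped: "\<not> ?thesis"
    show False
    proof (cases "t < p2")
      case True
      with trapped val new_value have "x ! p1 < x ! t" "x ! t < x ! p2" by auto
      then show False using min[of t p2 p3] \<open>t < p2\<close> t ord val
        by (auto simp: is_instance_3 width_def)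
    next
      case False
      then show False using trapped val new_value t by auto
    qed
  qed
qed (simp_all add: is_width_system_def)

lemma bountiful_312: "bountiful [3, 1, 2] [(1, 3)]"
proof (rule bountiful_length3I)
  fix x p1 p2 p3 t
  assume inst: "is_instance [3, 1, 2] x [p1, p2, p3]"
    and min: "\<And>a b c. is_instance [3, 1, 2] x [a, b, c] \<Longrightarrow> p1 \<le> a \<Longrightarrow> c \<le> p3 \<Longrightarrow>
      lex_le (width [(1, 3)] [p1, p2, p3]) (width [(1, 3)] [a, b, c])"
    and t: "p1 < t" "t < p3" "t \<noteq> p2"
    and new_value: "x ! t \<noteq> x ! p1" "x ! t \<noteq> x ! p2" "x ! t \<noteq> x ! p3"
  have ord: "p1 < p2" "p2 < p3" "p3 < length x" and val: "x ! p2 < x ! p3" "x ! p3 < x ! p1"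
    using inst by (simp_all add: is_instance_3)
  show "(x ! t < x ! p1 \<and> (p2 < t \<longrightarrow> x ! t < x ! p2)) \<or>
      ((t < p2 \<longrightarrow> x ! p2 < x ! t) \<and> x ! p3 < x ! t)"
  proof (rule ccontr)
    assume trapped: "\<not> ?thesis"
    show False
    proof (cases "t < p2")
      case True
      then show False using trapped val new_value by auto
    next
      case False
      with trapped val new_value t have "p2 < t" "x ! p2 < x ! t" "x ! t < x ! p3" by auto
      then show False using min[of p1 p2 t] t ord val
        by (auto simp: is_instance_3 width_def)
    qed
  qed
qed (simp_all add: is_width_system_def)

lemma bountiful_321: "bountiful [3, 2, 1] []"
proof (rule bountiful_length3I)
  fix x p1 p2 p3 t
  assume inst: "is_instance [3, 2, 1] x [p1, p2, p3]"
    and new_value: "x ! t \<noteq> x ! p1" "x ! t \<noteq> x ! p2" "x ! t \<noteq> x ! p3"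
  have val: "x ! p3 < x ! p2" "x ! p2 < x ! p1"
    using inst by (simp_all add: is_instance_3)
  show "(x ! t < x ! p1 \<and> (p2 < t \<longrightarrow> x ! t < x ! p2)) \<or>
      ((t < p2 \<longrightarrow> x ! p2 < x ! t) \<and> x ! p3 < x ! t)"
    using val new_value by (cases "x ! t < x ! p2") auto
qed (simp_all add: is_width_system_def)

lemma admits_bountifulI: "is_width_system sigma ws \<Longrightarrow> bountiful sigma ws \<Longrightarrow> admits_bountiful sigma"
  unfolding admits_bountiful_def by blast

theorem mainTheorem15:
  shows "\<forall>sigma \<in> {[1,3,2], [2,1,3], [2,3,1], [3,1,2], [3,2,1]}. admits_bountiful sigma"
  using bountiful_132 bountiful_213 bountiful_231 bountiful_312 bountiful_321
  by (auto intro!: admits_bountifulI simp: is_width_system_def)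

end
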